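(* For all integers $m \geq 3$ and $k$ with $2 \leq k \leq m-1$, $$\mathbb{P}_{X \sim B(m,\frac{k}{m})}\big[X \leq k\big] \leq 0.7152.$$
   Context: $B(m,p)$ denotes the binomial distribution with $m$ trials and success probability $p$: $\mathbb{P}[X=j]=\binom{m}{j}p^j(1-p)^{m-j}$ for $j=0,\dots,m$. *)

theory Defs
  imports "HOL-Probability.Probability"
begin

end

theory Submission
  imports Defs
begin

text \<open>Write \<open>F(m,k,p)\<close> for \<open>P[B(m,p) \<le> k]\<close>. The value at the mean, \<open>F(m,k,k/m)\<close>, does not
increase with \<open>m > k\<close>, so it is at most \<open>F(k+1,k,k/(k+1)) = 1 - (k/(k+1))^(k+1)\<close>; by Bernoulli's
inequality \<open>(k/(k+1))^(k+1)\<close> increases with \<open>k\<close>, so it is at least \<open>(2/3)^3 = 8/27\<close>, and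
\<open>1 - 8/27 = 19/27 < 0.7152\<close>.

For the monotonicity in \<open>m\<close>, let \<open>q = k/(m+1) \<le> r = k/m\<close>, \<open>b(p) = (m choose k) p^k (1-p)^(m-k)\<close>
and \<open>g(p) = F(m,k,p) - (k - m p) b(p)\<close>. Then \<open>g(r) = F(m,k,r)\<close>, and \<open>g(q) = F(m+1,k,q)\<close> by the
recursion \<open>F(m+1,k,p) = F(m,k,p) - p b(p)\<close>, while
\<open>g'(p) = (m choose k) p^(k-1) (1-p)^(m-k-1) (k - m p) ((m+1) p - k) \<ge> 0\<close> on \<open>[q,r]\<close>.\<close>

definition binomial_cdf :: "nat \<Rightarrow> nat \<Rightarrow> real \<Rightarrow> real" where
  "binomial_cdf m k p = (\<Sum>j\<le>k. real (m choose j) * p ^ j * (1 - p) ^ (m - j))"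

lemma prob_binomial_pmf_atMost:
  assumes "0 \<le> p" "p \<le> 1"
  shows "measure_pmf.prob (binomial_pmf m p) {..k} = binomial_cdf m k p"
  unfolding binomial_cdf_def by (simp add: measure_measure_pmf_finite pmf_binomial[OF assms])

lemma binomial_cdf_self: "binomial_cdf m m p = 1"
proof -
  have "binomial_cdf m m p = (p + (1 - p)) ^ m"
    unfolding binomial_cdf_def binomial_ring by (simp add: atLeast0AtMost)
  then show ?thesis by simp
qed

lemma binomial_cdf_Suc_self: "binomial_cdf (Suc k) k p = 1 - p ^ Suc k"
  using binomial_cdf_self[of "Suc k" p] by (simp add: binomial_cdf_def)

lemma binomial_cdf_Suc_trials:
  "binomial_cdf (Suc m) k p
    = binomial_cdf m k p - p * (real (m choose k) * p ^ k * (1 - p) ^ (m - k))"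
proof (induction k)
  case 0
  then show ?case by (simp add: binomial_cdf_def algebra_simps)
next
  case (Suc k)
  have tail: "real (m choose Suc k) * p ^ Suc k * (1 - p) ^ (m - k)
      = real (m choose Suc k) * p ^ Suc k * (1 - p) ^ (m - Suc k)
        - p * (real (m choose Suc k) * p ^ Suc k * (1 - p) ^ (m - Suc k))"
    by (cases "k < m") (simp_all add: Suc_diff_Suc[symmetric] algebra_simps)
  have "binomial_cdf (Suc m) (Suc k) p
      = binomial_cdf (Suc m) k p + real (Suc m choose Suc k) * p ^ Suc k * (1 - p) ^ (m - k)"
    by (simp add: binomial_cdf_def)
  also have "\<dots> = binomial_cdf m k p + real (m choose Suc k) * p ^ Suc k * (1 - p) ^ (m - k)"
    by (simp add: Suc.IH algebra_simps)
  also have "\<dots> = binomial_cdf m (Suc k) p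
      - p * (real (m choose Suc k) * p ^ Suc k * (1 - p) ^ (m - Suc k))"
    by (simp only: tail) (simp add: binomial_cdf_def)
  finally show ?case .
qed

lemma has_real_derivative_power_mult_power:
  "((\<lambda>x. x ^ Suc k * (1 - x) ^ n) has_real_derivative
      real (Suc k) * x ^ k * (1 - x) ^ n - real n * x ^ Suc k * (1 - x) ^ (n - 1)) (at x)"
proof -
  have "((\<lambda>x. x ^ Suc k) has_real_derivative real (Suc k) * x ^ k) (at x)"
    using DERIV_pow[of "Suc k" x] by simp
  moreover have
    "((\<lambda>x. (1 - x) ^ n) has_real_derivative - (real n * (1 - x) ^ (n - 1))) (at x)"
    by (auto intro!: derivative_eq_intros)
  ultimately have "((\<lambda>x. x ^ Suc k * (1 - x) ^ n) has_real_derivative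
      real (Suc k) * x ^ k * (1 - x) ^ n + - (real n * (1 - x) ^ (n - 1)) * x ^ Suc k) (at x)"
    by (rule DERIV_mult)
  then show ?thesis
    by (simp add: algebra_simps)
qed

lemma has_real_derivative_binomial_cdf:
  "(binomial_cdf m k has_real_derivative
     - (real (m - k) * real (m choose k) * x ^ k * (1 - x) ^ (m - k - 1))) (at x)"
proof (induction k)
  case 0
  have "binomial_cdf m 0 = (\<lambda>x. (1 - x) ^ m)" by (auto simp: binomial_cdf_def)
  then show ?case by (auto intro!: derivative_eq_intros)
next
  case (Suc k)
  have "(m - k) * (m choose k) = Suc k * (m choose Suc k)"
    by (simp only: binomial_absorb_comp binomial_absorption)
  then have absorb: "real (m - k) * real (m choose k) = real (Suc k) * real (m choose Suc k)"
    by (simp only: of_nat_mult[symmetric])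
  have "m - k - 1 = m - Suc k" by simp
  have cdf_Suc: "binomial_cdf m (Suc k)
      = (\<lambda>x. binomial_cdf m k x
          + real (m choose Suc k) * (x ^ Suc k * (1 - x) ^ (m - Suc k)))"
    by (auto simp: binomial_cdf_def mult.assoc)
  have derivative_Suc: "- (real (m - k) * real (m choose k) * x ^ k * (1 - x) ^ (m - k - 1))
      + real (m choose Suc k) * (real (Suc k) * x ^ k * (1 - x) ^ (m - Suc k)
        - real (m - Suc k) * x ^ Suc k * (1 - x) ^ (m - Suc k - 1))
    = - (real (m - Suc k) * real (m choose Suc k) * x ^ Suc k * (1 - x) ^ (m - Suc k - 1))"
    by (simp only: absorb \<open>m - k - 1 = m - Suc k\<close>) (simp add: algebra_simps)
  show ?case
    unfolding cdf_Suc derivative_Suc[symmetric]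
    by (intro DERIV_add DERIV_cmult Suc.IH has_real_derivative_power_mult_power)
qed

lemma has_real_derivative_binomial_cdf_minus_weighted_term:
  assumes "0 < k" "k < m"
  shows "((\<lambda>p. binomial_cdf m k p
        - (real k - real m * p) * (real (m choose k) * p ^ k * (1 - p) ^ (m - k)))
      has_real_derivative real (m choose k) * p ^ (k - 1) * (1 - p) ^ (m - k - 1)
        * ((real k - real m * p) * (real (Suc m) * p - real k))) (at p)"
proof -
  obtain a n where k: "k = Suc a" and mk: "m - k = Suc n"
    using assms by (metis Suc_diff_Suc gr0_conv_Suc)
  have m: "real m = real (Suc a) + real (Suc n)"
    using assms k mk by simp
  define C where "C = real (m choose k)"
  have d_cdf:
    "(binomial_cdf m k has_real_derivative - (real (Suc n) * C * p ^ k * (1 - p) ^ n)) (at p)"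
    using has_real_derivative_binomial_cdf[of m k p] by (simp add: mk C_def)
  have d_term: "((\<lambda>p. p ^ k * (1 - p) ^ (m - k)) has_real_derivative
      real k * p ^ a * (1 - p) ^ Suc n - real (Suc n) * p ^ k * (1 - p) ^ n) (at p)"
    using has_real_derivative_power_mult_power[of a "Suc n" p] by (simp only: mk) (simp add: k)
  have "((\<lambda>p. binomial_cdf m k p
        - (real k - real m * p) * (C * (p ^ k * (1 - p) ^ (m - k))))
      has_real_derivative - (real (Suc n) * C * p ^ k * (1 - p) ^ n)
        - ((0 - real m * 1) * (C * (p ^ k * (1 - p) ^ (m - k)))
          + C * (real k * p ^ a * (1 - p) ^ Suc n - real (Suc n) * p ^ k * (1 - p) ^ n)
            * (real k - real m * p))) (at p)"
    by (intro DERIV_diff DERIV_mult DERIV_cmult d_cdf d_term DERIV_const DERIV_ident)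
  moreover have "k - 1 = a" "m - k - 1 = n"
    using k mk by simp_all
  ultimately show ?thesis
    unfolding C_def[symmetric] by (simp only: mk) (simp add: k m algebra_simps)
qed

lemma binomial_cdf_at_mean_Suc_trials_le:
  assumes "0 < k" "k < m"
  shows "binomial_cdf (Suc m) k (real k / real (Suc m)) \<le> binomial_cdf m k (real k / real m)"
proof -
  define g where
    "g p = binomial_cdf m k p
      - (real k - real m * p) * (real (m choose k) * p ^ k * (1 - p) ^ (m - k))"
    for p
  define q where "q = real k / real (Suc m)"
  define r where "r = real k / real m"
  have "q \<le> r" "0 \<le> q" "r < 1"
    using assms by (simp_all add: q_def r_def frac_le)
  have "g q \<le> g r"
  proof (rule DERIV_nonneg_imp_nondecreasing[OF \<open>q \<le> r\<close>])
    fix p assume "q \<le> p" "p \<le> r"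
    then have "0 \<le> p" "p \<le> 1"
      using \<open>0 \<le> q\<close> \<open>r < 1\<close> by linarith+
    moreover have "0 \<le> real k - real m * p" "0 \<le> real (Suc m) * p - real k"
      using assms \<open>q \<le> p\<close> \<open>p \<le> r\<close> by (simp_all add: q_def r_def field_simps)
    ultimately show "\<exists>y. (g has_real_derivative y) (at p) \<and> 0 \<le> y"
      unfolding g_def[abs_def] using has_real_derivative_binomial_cdf_minus_weighted_term[OF assms]
      by (fastforce intro!: mult_nonneg_nonneg)
  qed
  moreover have "g r = binomial_cdf m k r"
    using assms by (simp add: g_def r_def)
  moreover have "g q = binomial_cdf (Suc m) k q"
  proof -
    have "real k - real m * q = q"
      by (simp add: q_def field_simps)
    then show ?thesis
      by (simp add: g_def binomial_cdf_Suc_trials)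
  qed
  ultimately show ?thesis
    by (simp add: q_def r_def)
qed

lemma binomial_cdf_at_mean_le:
  assumes "0 < k" "k < m"
  shows "binomial_cdf m k (real k / real m) \<le> 1 - (real k / (real k + 1)) ^ Suc k"
proof -
  have "Suc k \<le> m"
    using assms by simp
  then show ?thesis
  proof (induction m rule: dec_induct)
    case base
    then show ?case by (simp add: binomial_cdf_Suc_self add.commute)
  next
    case (step m)
    then show ?case
      using binomial_cdf_at_mean_Suc_trials_le[OF \<open>0 < k\<close>, of m] by simp
  qed
qed

lemma power_Suc_ratio_mono:
  assumes "0 < n"
  shows "(real n / (real n + 1)) ^ Suc n \<le> ((real n + 1) / (real n + 2)) ^ Suc (Suc n)"
proof -
  define x where "x = real n / (real n + 1)"
  define y where "y = (real n + 1) / (real n + 2)"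
  define e where "e = 1 / (real n * (real n + 2))"
  have y_eq: "y = x * (1 + e)"
    using assms by (simp add: x_def y_def e_def divide_simps) (simp add: algebra_simps)
  have "1 \<le> y * (1 + real (Suc n) * e)"
    using assms by (simp add: y_def e_def divide_simps) (simp add: algebra_simps)
  then have "x ^ Suc n \<le> x ^ Suc n * (y * (1 + real (Suc n) * e))"
    using mult_left_mono[of 1 _ "x ^ Suc n"] by (simp add: x_def)
  also have "\<dots> \<le> x ^ Suc n * (y * (1 + e) ^ Suc n)"
    by (intro mult_left_mono Bernoulli_inequality) 
      (simp_all add: x_def y_def e_def order_trans[of "-1" 0])
  also have "\<dots> = y ^ Suc (Suc n)"
    by (simp add: y_eq power_mult_distrib)
  finally show ?thesis
    by (simp add: x_def y_def)
qed

lemma power_Suc_ratio_ge_8_27: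
  assumes "2 \<le> k"
  shows "8 / 27 \<le> (real k / (real k + 1)) ^ Suc k"
  using assms
proof (induction k rule: dec_induct)
  case base
  then show ?case by (simp add: numeral_eq_Suc)
next
  case (step n)
  have "real (Suc n) / (real (Suc n) + 1) = (real n + 1) / (real n + 2)"
    by (simp add: add.commute)
  then show ?case
    using order_trans[OF step.IH power_Suc_ratio_mono] step.hyps by simp
qed

theorem corollary2:
  fixes m k :: nat
  assumes "m \<ge> 3" and "2 \<le> k" and "k \<le> m - 1"
  shows "measure_pmf.prob (binomial_pmf m (real k / real m)) {..k} \<le> 0.7152"
proof -
  have "0 < k" "k < m"
    using assms by simp_all
  then have "measure_pmf.prob (binomial_pmf m (real k / real m)) {..k}
      = binomial_cdf m k (real k / real m)"
    by (intro prob_binomial_pmf_atMost) simp_all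
  also have "\<dots> \<le> 1 - (real k / (real k + 1)) ^ Suc k"
    using \<open>0 < k\<close> \<open>k < m\<close> by (rule binomial_cdf_at_mean_le)
  also have "\<dots> \<le> 1 - 8 / 27"
    using power_Suc_ratio_ge_8_27[OF \<open>2 \<le> k\<close>] by simp
  also have "\<dots> \<le> 0.7152"
    by simp
  finally show ?thesis .
qed

end
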